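(* Let $P(k)=C_pT_p^k-C_mT_m^k$ with $C_p,C_m>0$, $T_p,T_m\in(0,1)$, $T_p\neq T_m$. For each integer $j\ge 0$ the $j$-th derivative $P^{(j)}$ has a unique zero $k^{(j)}$ (the $j$-th characteristic point), and $k^{(0)}<k^{(1)}<k^{(2)}<\dots$, i.e. the abscissa intersection point, the extremum, the inflection point and then the zeros of higher derivatives are located from left to right in this order. *)

theory Defs
  imports "HOL-Analysis.Analysis"
begin

definition charP :: "real \<Rightarrow> real \<Rightarrow> real \<Rightarrow> real \<Rightarrow> real \<Rightarrow> real" where
  "charP Cp Tp Cm Tm k = Cp * Tp powr k - Cm * Tm powr k"

end

theory Submission
  imports Defs
begin

text \<open>Every derivative of \<open>charP\<close> is again a difference of two exponentials,
  \<open>Cp (ln Tp)\<^sup>j Tp\<^sup>k - Cm (ln Tm)\<^sup>j Tm\<^sup>k\<close>. Since \<open>ln Tp, ln Tm < 0\<close>, the sign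
  \<open>(-1)\<^sup>j\<close> cancels and its zero solves \<open>Cp |ln Tp|\<^sup>j Tp\<^sup>k = Cm |ln Tm|\<^sup>j Tm\<^sup>k\<close>;
  taking logarithms gives a linear equation in \<open>k\<close> whose unique solution is affine
  in \<open>j\<close>, with slope \<open>(ln |ln Tm| - ln |ln Tp|) / (ln Tp - ln Tm)\<close>. The slope is
  positive because \<open>t \<mapsto> ln |ln t|\<close> is decreasing on \<open>(0, 1)\<close>.\<close>

lemma exp_two_term_eq_iff:
  fixes c1 c2 a b x :: real
  assumes "c1 > 0" "c2 > 0" "a \<noteq> b"
  shows "c1 * exp (x * a) = c2 * exp (x * b) \<longleftrightarrow> x = (ln c2 - ln c1) / (a - b)"
proof -
  have "c1 * exp (x * a) = c2 * exp (x * b) \<longleftrightarrow>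
        ln (c1 * exp (x * a)) = ln (c2 * exp (x * b))"
    using assms by (intro ln_inj_iff[symmetric]) auto
  also have "\<dots> \<longleftrightarrow> x * (a - b) = ln c2 - ln c1"
    using assms by (auto simp: ln_mult algebra_simps)
  also have "\<dots> \<longleftrightarrow> x = (ln c2 - ln c1) / (a - b)"
    using assms by (auto simp: field_simps)
  finally show ?thesis .
qed

lemma deriv_funpow_charP:
  assumes "0 < Tp" "0 < Tm"
  shows "(deriv ^^ j) (charP Cp Tp Cm Tm) =
         (\<lambda>k. Cp * ln Tp ^ j * exp (k * ln Tp) - Cm * ln Tm ^ j * exp (k * ln Tm))"
proof (induction j)
  case 0
  show ?case using assms by (simp add: charP_def powr_def fun_eq_iff)
next
  case (Suc j)
  have "((\<lambda>k. Cp * ln Tp ^ j * exp (k * ln Tp) - Cm * ln Tm ^ j * exp (k * ln Tm))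
         has_real_derivative
           Cp * ln Tp ^ Suc j * exp (k * ln Tp) - Cm * ln Tm ^ Suc j * exp (k * ln Tm)) (at k)"
    for k
    by (auto intro!: derivative_eq_intros simp: algebra_simps)
  then show ?case
    using Suc.IH by (auto simp: DERIV_imp_deriv)
qed

definition char_point :: "real \<Rightarrow> real \<Rightarrow> real \<Rightarrow> real \<Rightarrow> nat \<Rightarrow> real" where
  "char_point Cp Tp Cm Tm j =
     (ln Cm - ln Cp) / (ln Tp - ln Tm)
     + real j * ((ln (- ln Tm) - ln (- ln Tp)) / (ln Tp - ln Tm))"

lemma deriv_funpow_charP_eq_0_iff:
  assumes "Cp > 0" "Cm > 0" "0 < Tp" "Tp < 1" "0 < Tm" "Tm < 1" "Tp \<noteq> Tm"
  shows "(deriv ^^ j) (charP Cp Tp Cm Tm) x = 0 \<longleftrightarrow> x = char_point Cp Tp Cm Tm j"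
proof -
  define a b where "a = ln Tp" and "b = ln Tm"
  have "a < 0" "b < 0" "a \<noteq> b"
    using assms by (auto simp: a_def b_def)
  have sign: "c ^ j = (-1) ^ j * (- c) ^ j" for c :: real
    by (metis minus_minus mult_minus1 power_mult_distrib)
  have "(deriv ^^ j) (charP Cp Tp Cm Tm) x = 0 \<longleftrightarrow>
        (-1) ^ j * (Cp * (- a) ^ j * exp (x * a)) = (-1) ^ j * (Cm * (- b) ^ j * exp (x * b))"
    unfolding deriv_funpow_charP[OF assms(3,5)] a_def[symmetric] b_def[symmetric]
    by (subst (1 2) sign) (simp add: mult_ac)
  also have "\<dots> \<longleftrightarrow> Cp * (- a) ^ j * exp (x * a) = Cm * (- b) ^ j * exp (x * b)"
    by simp
  also have "\<dots> \<longleftrightarrow> x = (ln (Cm * (- b) ^ j) - ln (Cp * (- a) ^ j)) / (a - b)"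
    using assms \<open>a < 0\<close> \<open>b < 0\<close> \<open>a \<noteq> b\<close> by (intro exp_two_term_eq_iff) auto
  also have "ln (Cm * (- b) ^ j) - ln (Cp * (- a) ^ j) = ln Cm - ln Cp + real j * (ln (- b) - ln (- a))"
    using assms \<open>a < 0\<close> \<open>b < 0\<close> by (simp add: ln_mult ln_realpow algebra_simps)
  also have "(\<dots>) / (a - b) = char_point Cp Tp Cm Tm j"
    by (simp add: char_point_def a_def b_def add_divide_distrib)
  finally show ?thesis .
qed

lemma ln_neg_diff_quotient_pos:
  fixes a b :: real
  assumes "a < 0" "b < 0" "a \<noteq> b"
  shows "(ln (- b) - ln (- a)) / (a - b) > 0"
proof (cases "a < b")
  case True
  then have "ln (- b) < ln (- a)"
    using assms by simp
  with True show ?thesis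
    by (simp add: divide_neg_neg)
next
  case False
  then have "b < a"
    using assms by simp
  then have "ln (- a) < ln (- b)"
    using assms by simp
  with \<open>b < a\<close> show ?thesis
    by simp
qed

lemma strict_mono_char_point:
  assumes "0 < Tp" "Tp < 1" "0 < Tm" "Tm < 1" "Tp \<noteq> Tm"
  shows "strict_mono (char_point Cp Tp Cm Tm)"
proof (rule strict_monoI)
  fix m n :: nat
  assume "m < n"
  define s where "s = (ln (- ln Tm) - ln (- ln Tp)) / (ln Tp - ln Tm)"
  have "s > 0"
    unfolding s_def using assms by (intro ln_neg_diff_quotient_pos) auto
  then have "real m * s < real n * s"
    using \<open>m < n\<close> by simp
  then show "char_point Cp Tp Cm Tm m < char_point Cp Tp Cm Tm n"
    by (simp add: char_point_def s_def)
qed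

theorem corollary3:
  fixes Cp Cm Tp Tm :: real
  assumes "Cp > 0" and "Cm > 0"
    and "0 < Tp" and "Tp < 1" and "0 < Tm" and "Tm < 1"
    and "Tp \<noteq> Tm"
  shows "\<exists>kk :: nat \<Rightarrow> real.
           (\<forall>j. ((deriv ^^ j) (charP Cp Tp Cm Tm) (kk j) = 0
                 \<and> (\<forall>x. (deriv ^^ j) (charP Cp Tp Cm Tm) x = 0 \<longrightarrow> x = kk j)))
           \<and> strict_mono kk"
  using deriv_funpow_charP_eq_0_iff[OF assms] strict_mono_char_point[OF assms(3-7)]
  by blast

end
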